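(* Fix $\Lambda=(\lambda_1,\lambda_2)\in(0,\infty)^2$ and $\theta\in(0,1]$. For $(X_1,X_2)\sim\mathcal{BZIP}^-(\Lambda,\theta,\phi)$, the function $\phi\mapsto\mathrm{corr}(X_1,X_2)$ is increasing on $(0,1)$. More precisely, writing $\mathrm{corr}(X_1,X_2)=a_\Lambda(\phi)\,\mathrm{corr}(T_1,T_2)+b_\Lambda(\phi)$ with $a_\Lambda(\phi)=\{(1+\phi\lambda_1)(1+\phi\lambda_2)\}^{-1/2}$ and $b_\Lambda(\phi)=\phi\,a_\Lambda(\phi)\sqrt{\lambda_1\lambda_2}$, the function $a_\Lambda$ is decreasing and positive, $b_\Lambda$ is strictly increasing on $(0,1)$ (for every $\Lambda\in(0,\infty)^2$), and $\mathrm{corr}(T_1,T_2)\le 0$.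
   Context: For $\mu>0$, $G_\mu$ denotes the Poisson($\mu$) distribution function and $G_\mu^{-1}(u)=\inf\{x\in\mathbb N:G_\mu(x)\ge u\}$. $\mathcal{BZIP}^-(\Lambda,\theta,\phi)$ is the law of $(X_1,X_2)=W(T_1,T_2)$ with $W\sim$ Bernoulli$(1-\phi)$, $T_j=Y_j+Z_j$, $Y_j\sim\mathcal P((1-\theta)\lambda_j)$, $(Z_1,Z_2)=(G^{-1}_{\theta\lambda_1}(U),G^{-1}_{\theta\lambda_2}(1-U))$ with $U\sim\mathcal U(0,1)$, and $W,Y_1,Y_2,U$ mutually independent; the correlation of $(T_1,T_2)$ does not depend on $\phi$. *)

theory Defs
  imports "HOL-Probability.Probability"
begin

definition pois :: "real \<Rightarrow> nat pmf" where
  "pois mu = (if mu = 0 then return_pmf 0 else poisson_pmf mu)"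

definition pois_cdf :: "real \<Rightarrow> nat \<Rightarrow> real" where
  "pois_cdf mu x = measure_pmf.prob (pois mu) {..x}"

definition pois_qf :: "real \<Rightarrow> real \<Rightarrow> nat" where
  "pois_qf mu u = (LEAST x. u \<le> pois_cdf mu x)"

definition cov :: "'a measure \<Rightarrow> ('a \<Rightarrow> real) \<Rightarrow> ('a \<Rightarrow> real) \<Rightarrow> real" where
  "cov M X Y = (\<integral>w. X w * Y w \<partial>M) - (\<integral>w. X w \<partial>M) * (\<integral>w. Y w \<partial>M)"

definition corr :: "'a measure \<Rightarrow> ('a \<Rightarrow> real) \<Rightarrow> ('a \<Rightarrow> real) \<Rightarrow> real" where
  "corr M X Y = cov M X Y / sqrt (cov M X X * cov M Y Y)"

definition T_space :: "real \<Rightarrow> real \<Rightarrow> real \<Rightarrow> (real \<times> nat \<times> nat) measure" where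
  "T_space l1 l2 th =
     uniform_measure lborel {0<..<1::real} \<Otimes>\<^sub>M
       (measure_pmf (pois ((1 - th) * l1)) \<Otimes>\<^sub>M measure_pmf (pois ((1 - th) * l2)))"

definition T1 :: "real \<Rightarrow> real \<Rightarrow> (real \<times> nat \<times> nat) \<Rightarrow> real" where
  "T1 l1 th = (\<lambda>(u, y1, y2). real (y1 + pois_qf (th * l1) u))"

definition T2 :: "real \<Rightarrow> real \<Rightarrow> (real \<times> nat \<times> nat) \<Rightarrow> real" where
  "T2 l2 th = (\<lambda>(u, y1, y2). real (y2 + pois_qf (th * l2) (1 - u)))"

definition X_space :: "real \<Rightarrow> real \<Rightarrow> real \<Rightarrow> real \<Rightarrow> ((real \<times> nat \<times> nat) \<times> bool) measure" where
  "X_space l1 l2 th ph = T_space l1 l2 th \<Otimes>\<^sub>M measure_pmf (bernoulli_pmf (1 - ph))"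

definition X1 :: "real \<Rightarrow> real \<Rightarrow> ((real \<times> nat \<times> nat) \<times> bool) \<Rightarrow> real" where
  "X1 l1 th = (\<lambda>(v, w). if w then T1 l1 th v else 0)"

definition X2 :: "real \<Rightarrow> real \<Rightarrow> ((real \<times> nat \<times> nat) \<times> bool) \<Rightarrow> real" where
  "X2 l2 th = (\<lambda>(v, w). if w then T2 l2 th v else 0)"

definition corrT :: "real \<Rightarrow> real \<Rightarrow> real \<Rightarrow> real" where
  "corrT l1 l2 th = corr (T_space l1 l2 th) (T1 l1 th) (T2 l2 th)"

definition corrX :: "real \<Rightarrow> real \<Rightarrow> real \<Rightarrow> real \<Rightarrow> real" where
  "corrX l1 l2 th ph = corr (X_space l1 l2 th ph) (X1 l1 th) (X2 l2 th)"

definition a_Lam :: "real \<Rightarrow> real \<Rightarrow> real \<Rightarrow> real" where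
  "a_Lam l1 l2 ph = 1 / sqrt ((1 + ph * l1) * (1 + ph * l2))"

definition b_Lam :: "real \<Rightarrow> real \<Rightarrow> real \<Rightarrow> real" where
  "b_Lam l1 l2 ph = ph * a_Lam l1 l2 ph * sqrt (l1 * l2)"

end

theory Submission
  imports Defs
begin

text \<open>
  Conditioning on \<open>W\<close>, every first and second moment of \<open>(X\<^sub>1, X\<^sub>2)\<close> is \<open>1 - \<phi>\<close> times
  the corresponding moment of \<open>(T\<^sub>1, T\<^sub>2)\<close>, so
  \<open>cov(X\<^sub>1, X\<^sub>2) = (1 - \<phi>) cov(T\<^sub>1, T\<^sub>2) + \<phi>(1 - \<phi>) E T\<^sub>1 E T\<^sub>2\<close>.
  By the quantile transform \<open>Z\<^sub>j\<close> is Poisson(\<open>\<theta>\<lambda>\<^sub>j\<close>), and \<open>Y\<^sub>j\<close> is an independent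
  Poisson(\<open>(1 - \<theta>)\<lambda>\<^sub>j\<close>) summand, so \<open>E T\<^sub>j = var T\<^sub>j = \<lambda>\<^sub>j\<close> and
  \<open>cov(T\<^sub>1, T\<^sub>2) = cov(Z\<^sub>1, Z\<^sub>2)\<close>; this yields the affine formula
  \<open>corr(X\<^sub>1, X\<^sub>2) = a\<^sub>\<Lambda>(\<phi>) corr(T\<^sub>1, T\<^sub>2) + b\<^sub>\<Lambda>(\<phi>)\<close>.
  Since \<open>Z\<^sub>1\<close> is a nondecreasing and \<open>Z\<^sub>2\<close> a nonincreasing function of the same uniform \<open>U\<close>,
  Chebyshev's integral inequality gives \<open>cov(Z\<^sub>1, Z\<^sub>2) \<le> 0\<close>. Hence \<open>a\<^sub>\<Lambda>(\<phi>) corr(T\<^sub>1, T\<^sub>2)\<close>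
  is nondecreasing because \<open>a\<^sub>\<Lambda>\<close> decreases, and adding the increasing \<open>b\<^sub>\<Lambda>\<close> keeps it so.
\<close>

section \<open>Bochner integrals on image and product measures\<close>

lemma (in prob_space) has_bochner_integral_const:
  "has_bochner_integral M (\<lambda>_. c) (c :: 'b :: {banach, second_countable_topology})"
  by (simp add: has_bochner_integral_iff prob_space)

lemma has_bochner_integral_distr_iff:
  fixes f :: "'b \<Rightarrow> 'c :: {banach, second_countable_topology}"
  assumes "f \<in> borel_measurable N" and "g \<in> M \<rightarrow>\<^sub>M N"
  shows "has_bochner_integral (distr M N g) f x \<longleftrightarrow> has_bochner_integral M (\<lambda>x. f (g x)) x"
  using assms by (simp add: has_bochner_integral_iff integrable_distr_eq integral_distr)

lemma has_bochner_integral_pair_measure_mult: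
  fixes f :: "'a \<Rightarrow> real" and g :: "'b \<Rightarrow> real"
  assumes "sigma_finite_measure M" and "sigma_finite_measure N"
    and f: "has_bochner_integral M f a" and g: "has_bochner_integral N g b"
  shows "has_bochner_integral (M \<Otimes>\<^sub>M N) (\<lambda>x. f (fst x) * g (snd x)) (a * b)"
proof -
  interpret pair_sigma_finite M N
    using assms(1,2) by (simp add: pair_sigma_finite_def)
  have int_f: "integrable M f" and int_g: "integrable N g"
    using f g by (auto simp: has_bochner_integral_iff)
  then have [measurable]: "f \<in> borel_measurable M" "g \<in> borel_measurable N"
    by auto
  have int: "integrable (M \<Otimes>\<^sub>M N) (\<lambda>x. f (fst x) * g (snd x))"
  proof (rule Fubini_integrable)
    show "integrable M (\<lambda>x. \<integral>y. norm (f (fst (x, y)) * g (snd (x, y))) \<partial>N)"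
      using int_f int_g by (simp add: abs_mult)
  qed (use int_g in simp_all)
  have "(\<integral>x. f (fst x) * g (snd x) \<partial>(M \<Otimes>\<^sub>M N)) = (\<integral>x. (\<integral>y. f x * g y \<partial>N) \<partial>M)"
    using integral_fst'[OF int] by simp
  also have "\<dots> = a * b"
    using f g by (simp add: has_bochner_integral_iff)
  finally show ?thesis
    using int by (simp add: has_bochner_integral_iff)
qed

lemma has_bochner_integral_pair_measure_fst:
  fixes f :: "'a \<Rightarrow> real"
  assumes "sigma_finite_measure M" and "prob_space N" and "has_bochner_integral M f a"
  shows "has_bochner_integral (M \<Otimes>\<^sub>M N) (\<lambda>x. f (fst x)) a"
  using has_bochner_integral_pair_measure_mult[OF assms(1) prob_space_imp_sigma_finite[OF assms(2)]
      assms(3) prob_space.has_bochner_integral_const[OF assms(2), of 1]]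
  by simp

lemma has_bochner_integral_pair_measure_snd:
  fixes g :: "'b \<Rightarrow> real"
  assumes "prob_space M" and "sigma_finite_measure N" and "has_bochner_integral N g b"
  shows "has_bochner_integral (M \<Otimes>\<^sub>M N) (\<lambda>x. g (snd x)) b"
  using has_bochner_integral_pair_measure_mult[OF prob_space_imp_sigma_finite[OF assms(1)] assms(2)
      prob_space.has_bochner_integral_const[OF assms(1), of 1] assms(3)]
  by simp

lemma has_bochner_integral_pair_measure_add:
  fixes f :: "'a \<Rightarrow> real" and g :: "'b \<Rightarrow> real"
  assumes "prob_space M" and "prob_space N"
    and "has_bochner_integral M f a" and "has_bochner_integral N g b"
  shows "has_bochner_integral (M \<Otimes>\<^sub>M N) (\<lambda>z. f (fst z) + g (snd z)) (a + b)"
  using assms by (intro has_bochner_integral_add has_bochner_integral_pair_measure_fst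
      has_bochner_integral_pair_measure_snd prob_space_imp_sigma_finite)

lemma has_bochner_integral_pair_measure_add_mult:
  fixes f1 f2 :: "'a \<Rightarrow> real" and g1 g2 :: "'b \<Rightarrow> real"
  assumes M: "prob_space M" and N: "prob_space N"
    and f1: "has_bochner_integral M f1 a1" and f2: "has_bochner_integral M f2 a2"
    and f12: "has_bochner_integral M (\<lambda>x. f1 x * f2 x) a12"
    and g1: "has_bochner_integral N g1 b1" and g2: "has_bochner_integral N g2 b2"
    and g12: "has_bochner_integral N (\<lambda>y. g1 y * g2 y) b12"
  shows "has_bochner_integral (M \<Otimes>\<^sub>M N)
      (\<lambda>z. (f1 (fst z) + g1 (snd z)) * (f2 (fst z) + g2 (snd z))) (a12 + a1 * b2 + a2 * b1 + b12)"
proof -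
  note sf = prob_space_imp_sigma_finite[OF M] prob_space_imp_sigma_finite[OF N]
  have "has_bochner_integral (M \<Otimes>\<^sub>M N)
      (\<lambda>z. f1 (fst z) * f2 (fst z) + f1 (fst z) * g2 (snd z) + f2 (fst z) * g1 (snd z)
         + g1 (snd z) * g2 (snd z)) (a12 + a1 * b2 + a2 * b1 + b12)"
    using has_bochner_integral_pair_measure_fst[OF sf(1) N f12]
      has_bochner_integral_pair_measure_snd[OF M sf(2) g12]
    by (intro has_bochner_integral_add has_bochner_integral_pair_measure_mult sf f1 f2 g1 g2)
  then show ?thesis
    by (rule has_bochner_integral_cong[THEN iffD1, rotated -1]) (simp_all add: algebra_simps)
qed

section \<open>Moments of the Poisson distribution\<close>

lemma has_bochner_integral_measure_pmf_nat:
  fixes h :: "nat \<Rightarrow> real"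
  assumes nonneg: "\<And>k. 0 \<le> h k" and sums: "(\<lambda>k. pmf p k * h k) sums s"
  shows "has_bochner_integral (measure_pmf p) h s"
proof (rule has_bochner_integral_nn_integral)
  have terms_nonneg: "\<And>k. 0 \<le> pmf p k * h k"
    using nonneg by simp
  show "0 \<le> s"
    using sums_le[OF _ sums_zero sums] terms_nonneg by blast
  have "(\<integral>\<^sup>+ x. ennreal (h x) \<partial>measure_pmf p) = (\<integral>\<^sup>+ x. ennreal (pmf p x * h x) \<partial>count_space UNIV)"
    by (subst nn_integral_measure_pmf, intro nn_integral_cong) (simp add: ennreal_mult nonneg)
  also have "\<dots> = (\<Sum>k. ennreal (pmf p k * h k))"
    by (rule nn_integral_count_space_nat)
  also have "\<dots> = ennreal s"
    using terms_nonneg sums by (subst suminf_ennreal2) (auto simp: sums_iff)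
  finally show "(\<integral>\<^sup>+ x. ennreal (h x) \<partial>measure_pmf p) = ennreal s" .
qed (use nonneg in simp_all)

lemma poisson_pmf_moment_sums:
  assumes mu: "0 < mu"
  shows "(\<lambda>k. pmf (poisson_pmf mu) k * real k) sums mu"
    and "(\<lambda>k. pmf (poisson_pmf mu) k * real k ^ 2) sums (mu + mu\<^sup>2)"
proof -
  define q where "q = pmf (poisson_pmf mu)"
  have q_sums: "q sums 1"
  proof -
    have "q = (\<lambda>n. mu ^ n /\<^sub>R fact n * exp (- mu))"
      using mu by (simp add: q_def fun_eq_iff divide_inverse)
    moreover have "(\<lambda>n. mu ^ n /\<^sub>R fact n * exp (- mu)) sums (exp mu * exp (- mu))"
      by (rule sums_mult2[OF exp_converges])
    ultimately show ?thesis
      by (simp add: exp_minus_inverse)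
  qed
  have q_Suc: "q (Suc n) * real (Suc n) = mu * q n" for n
    using mu by (simp add: q_def field_simps del: of_nat_Suc)
  have "(\<lambda>n. mu * q n) sums (mu * 1)"
    using q_sums by (rule sums_mult)
  then have "(\<lambda>n. q (Suc n) * real (Suc n)) sums mu"
    unfolding q_Suc by simp
  then show first: "(\<lambda>k. q k * real k) sums mu"
    by (subst (asm) sums_Suc_iff) simp
  have "(\<lambda>n. mu * (q n * real n) + mu * q n) sums (mu * mu + mu * 1)"
    using q_sums first by (intro sums_add sums_mult)
  moreover have "q (Suc n) * real (Suc n) ^ 2 = mu * (q n * real n) + mu * q n" for n
  proof -
    have "q (Suc n) * real (Suc n) ^ 2 = mu * q n * real (Suc n)"
      by (simp only: power2_eq_square mult.assoc[symmetric] q_Suc)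
    then show ?thesis
      by (simp add: algebra_simps)
  qed
  ultimately have "(\<lambda>n. q (Suc n) * real (Suc n) ^ 2) sums (mu + mu\<^sup>2)"
    by (simp add: power2_eq_square add.commute)
  then show "(\<lambda>k. q k * real k ^ 2) sums (mu + mu\<^sup>2)"
    by (subst (asm) sums_Suc_iff) simp
qed

lemma has_bochner_integral_poisson_pmf:
  assumes "0 < mu"
  shows "has_bochner_integral (poisson_pmf mu) real mu"
    and "has_bochner_integral (poisson_pmf mu) (\<lambda>k. real k ^ 2) (mu + mu\<^sup>2)"
  using poisson_pmf_moment_sums[OF assms]
  by (auto intro: has_bochner_integral_measure_pmf_nat)

lemma has_bochner_integral_pois:
  assumes "0 \<le> mu"
  shows "has_bochner_integral (pois mu) real mu"
    and "has_bochner_integral (pois mu) (\<lambda>k. real k ^ 2) (mu + mu\<^sup>2)"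
  using assms has_bochner_integral_poisson_pmf[of mu]
  by (auto simp: pois_def has_bochner_integral_iff integrable_measure_pmf_finite)

section \<open>The Poisson quantile transform\<close>

abbreviation uniform_01 :: "real measure" where
  "uniform_01 \<equiv> uniform_measure lborel {0<..<1}"

lemma prob_space_uniform_01: "prob_space uniform_01"
  by (rule prob_space_uniform_measure) auto

lemma measurable_uniform_01_eq: "uniform_01 \<rightarrow>\<^sub>M N = borel \<rightarrow>\<^sub>M N"
  by (rule measurable_cong_sets) simp_all

lemma distr_uniform_01_eq_measure_pmf:
  fixes h :: "real \<Rightarrow> 'a :: countable"
  assumes [measurable]: "h \<in> borel \<rightarrow>\<^sub>M count_space UNIV"
    and preimage: "\<And>k. emeasure lborel ({0<..<1} \<inter> h -` {k}) = pmf p k"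
  shows "distr uniform_01 (count_space UNIV) h = measure_pmf p"
proof (rule measure_eqI_countable[where A = UNIV])
  fix k
  have "h -` {k} \<in> sets borel"
    using measurable_sets[OF assms(1), of "{k}"] by simp
  then have "emeasure uniform_01 (h -` {k}) = emeasure lborel ({0<..<1} \<inter> h -` {k})"
    by (simp add: emeasure_uniform_measure Int_commute divide_ennreal_def)
  then show "emeasure (distr uniform_01 (count_space UNIV) h) {k} = emeasure (measure_pmf p) {k}"
    by (simp add: emeasure_distr preimage emeasure_pmf_single)
qed simp_all

context
  fixes mu :: real
  assumes mu_pos: "0 < mu"
begin

lemma pois_eq_poisson_pmf: "pois mu = poisson_pmf mu"
  using mu_pos by (simp add: pois_def)

lemma pois_cdf_eq_sum: "pois_cdf mu k = (\<Sum>i\<le>k. pmf (poisson_pmf mu) i)"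
  by (simp add: pois_cdf_def pois_eq_poisson_pmf measure_measure_pmf_finite)

lemma pois_cdf_minus_pmf: "pois_cdf mu k - pmf (poisson_pmf mu) k = (\<Sum>i<k. pmf (poisson_pmf mu) i)"
  by (simp add: pois_cdf_eq_sum lessThan_Suc_atMost[symmetric])

lemma mono_pois_cdf: "mono (pois_cdf mu)"
  by (auto intro!: monoI sum_mono2 simp: pois_cdf_eq_sum)

lemma pois_cdf_less_1: "pois_cdf mu k < 1"
proof -
  have "pois_cdf mu k + pmf (poisson_pmf mu) (Suc k) = pois_cdf mu (Suc k)"
    by (simp add: pois_cdf_eq_sum)
  moreover have "pois_cdf mu (Suc k) \<le> 1"
    by (simp add: pois_cdf_def)
  moreover have "0 < pmf (poisson_pmf mu) (Suc k)"
    using mu_pos by simp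
  ultimately show ?thesis
    by linarith
qed

lemma LIMSEQ_pois_cdf: "pois_cdf mu \<longlonglongrightarrow> 1"
proof -
  have "(\<lambda>k. measure (poisson_pmf mu) {..k}) \<longlonglongrightarrow> measure (poisson_pmf mu) (\<Union>k. {..k})"
    by (rule measure_pmf.finite_Lim_measure_incseq) (auto simp: incseq_def)
  moreover have "pois_cdf mu = (\<lambda>k. measure (poisson_pmf mu) {..k})"
    by (simp add: fun_eq_iff pois_cdf_def pois_eq_poisson_pmf)
  ultimately show ?thesis
    by (simp add: UN_atMost_UNIV)
qed

lemma pois_qf_le_iff:
  assumes "u < 1"
  shows "pois_qf mu u \<le> k \<longleftrightarrow> u \<le> pois_cdf mu k"
proof
  obtain j where "\<forall>i\<ge>j. u < pois_cdf mu i"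
    using order_tendstoD(1)[OF LIMSEQ_pois_cdf assms] by (auto simp: eventually_sequentially)
  then have "u \<le> pois_cdf mu j"
    by auto
  then have "u \<le> pois_cdf mu (pois_qf mu u)"
    unfolding pois_qf_def by (rule LeastI)
  moreover assume "pois_qf mu u \<le> k"
  ultimately show "u \<le> pois_cdf mu k"
    using mono_pois_cdf by (meson monoD order_trans)
next
  assume "u \<le> pois_cdf mu k"
  then show "pois_qf mu u \<le> k"
    unfolding pois_qf_def by (rule Least_le)
qed

lemma pois_qf_mono:
  assumes "u \<le> v" and "v < 1"
  shows "pois_qf mu u \<le> pois_qf mu v"
proof -
  have "v \<le> pois_cdf mu (pois_qf mu v)"
    using pois_qf_le_iff[OF assms(2)] by blast
  then show ?thesis
    using pois_qf_le_iff[of u "pois_qf mu v"] assms by simp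
qed

lemma pois_qf_eq_iff:
  assumes "u < 1"
  shows "pois_qf mu u = k \<longleftrightarrow>
    (k = 0 \<or> pois_cdf mu k - pmf (poisson_pmf mu) k < u) \<and> u \<le> pois_cdf mu k"
proof (cases k)
  case 0
  then show ?thesis
    using pois_qf_le_iff[OF assms, of 0] by simp
next
  case (Suc j)
  have "pois_cdf mu k - pmf (poisson_pmf mu) k = pois_cdf mu j"
    by (simp add: Suc pois_cdf_eq_sum)
  moreover have "pois_qf mu u = k \<longleftrightarrow> pois_qf mu u \<le> k \<and> \<not> pois_qf mu u \<le> j"
    using Suc by auto
  ultimately show ?thesis
    using pois_qf_le_iff[OF assms, of k] pois_qf_le_iff[OF assms, of j] Suc
    by (simp add: not_le conj_commute)
qed

text \<open>Beyond the range of the distribution function the quantile is the junk value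
  \<open>LEAST x. False\<close>; this only matters for measurability.\<close>

lemma pois_qf_ge_1:
  assumes "1 \<le> u"
  shows "pois_qf mu u = pois_qf mu 1"
proof -
  have "\<not> u \<le> pois_cdf mu x" "\<not> 1 \<le> pois_cdf mu x" for x
    using pois_cdf_less_1[of x] assms by linarith+
  then show ?thesis
    unfolding pois_qf_def by simp
qed

lemma measurable_pois_qf[measurable]: "pois_qf mu \<in> borel \<rightarrow>\<^sub>M count_space UNIV"
  unfolding measurable_count_space_eq2_countable
proof (intro conjI ballI)
  fix k
  have "pois_qf mu -` {k} =
      {u. u < 1 \<and> (k = 0 \<or> pois_cdf mu k - pmf (poisson_pmf mu) k < u) \<and> u \<le> pois_cdf mu k}
      \<union> {u. 1 \<le> u \<and> pois_qf mu 1 = k}" (is "_ = ?S")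
  proof (rule set_eqI)
    fix u
    show "u \<in> pois_qf mu -` {k} \<longleftrightarrow> u \<in> ?S"
      using pois_qf_eq_iff[of u k] pois_qf_ge_1[of u] by (cases "u < 1") simp_all
  qed
  then show "pois_qf mu -` {k} \<inter> space borel \<in> sets borel"
    by simp
qed auto

lemma distr_pois_qf: "distr uniform_01 (count_space UNIV) (pois_qf mu) = measure_pmf (poisson_pmf mu)"
proof (rule distr_uniform_01_eq_measure_pmf)
  fix k
  have "{0<..<1} \<inter> pois_qf mu -` {k} = {pois_cdf mu k - pmf (poisson_pmf mu) k <.. pois_cdf mu k}"
    (is "?A = ?B")
  proof (rule set_eqI)
    fix u
    show "u \<in> ?A \<longleftrightarrow> u \<in> ?B"
      using pois_qf_eq_iff[of u k] pois_cdf_less_1[of k] pois_cdf_minus_pmf[of k]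
        sum_nonneg[of "{..<k}" "pmf (poisson_pmf mu)"]
      by (cases "0 < u \<and> u < 1") auto
  qed
  then show "emeasure lborel ?A = pmf (poisson_pmf mu) k"
    by simp
qed simp

lemma distr_pois_qf_reflect:
  "distr uniform_01 (count_space UNIV) (\<lambda>u. pois_qf mu (1 - u)) = measure_pmf (poisson_pmf mu)"
proof (rule distr_uniform_01_eq_measure_pmf)
  fix k
  have "{0<..<1} \<inter> (\<lambda>u. pois_qf mu (1 - u)) -` {k} =
      {1 - pois_cdf mu k ..< 1 - (pois_cdf mu k - pmf (poisson_pmf mu) k)}" (is "?A = ?B")
  proof (rule set_eqI)
    fix u
    show "u \<in> ?A \<longleftrightarrow> u \<in> ?B"
      using pois_qf_eq_iff[of "1 - u" k] pois_cdf_less_1[of k] pois_cdf_minus_pmf[of k]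
        sum_nonneg[of "{..<k}" "pmf (poisson_pmf mu)"]
      by (cases "0 < u \<and> u < 1") auto
  qed
  then show "emeasure lborel ?A = pmf (poisson_pmf mu) k"
    by simp
qed simp

lemma has_bochner_integral_pois_qf:
  shows "has_bochner_integral uniform_01 (\<lambda>u. real (pois_qf mu u)) mu"
    and "has_bochner_integral uniform_01 (\<lambda>u. real (pois_qf mu u) ^ 2) (mu + mu\<^sup>2)"
    and "has_bochner_integral uniform_01 (\<lambda>u. real (pois_qf mu (1 - u))) mu"
    and "has_bochner_integral uniform_01 (\<lambda>u. real (pois_qf mu (1 - u)) ^ 2) (mu + mu\<^sup>2)"
proof -
  have meas: "pois_qf mu \<in> uniform_01 \<rightarrow>\<^sub>M count_space UNIV"
      "(\<lambda>u. pois_qf mu (1 - u)) \<in> uniform_01 \<rightarrow>\<^sub>M count_space UNIV"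
    by (simp_all add: measurable_uniform_01_eq)
  note moments = has_bochner_integral_poisson_pmf[OF mu_pos]
  show "has_bochner_integral uniform_01 (\<lambda>u. real (pois_qf mu u)) mu"
      "has_bochner_integral uniform_01 (\<lambda>u. real (pois_qf mu u) ^ 2) (mu + mu\<^sup>2)"
    using moments has_bochner_integral_distr_iff[OF _ meas(1), of real mu]
      has_bochner_integral_distr_iff[OF _ meas(1), of "\<lambda>k. real k ^ 2" "mu + mu\<^sup>2"]
    by (simp_all add: distr_pois_qf)
  show "has_bochner_integral uniform_01 (\<lambda>u. real (pois_qf mu (1 - u))) mu"
      "has_bochner_integral uniform_01 (\<lambda>u. real (pois_qf mu (1 - u)) ^ 2) (mu + mu\<^sup>2)"
    using moments has_bochner_integral_distr_iff[OF _ meas(2), of real mu]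
      has_bochner_integral_distr_iff[OF _ meas(2), of "\<lambda>k. real k ^ 2" "mu + mu\<^sup>2"]
    by (simp_all add: distr_pois_qf_reflect)
qed

end

section \<open>Chebyshev's integral inequality and the antithetic coupling\<close>

lemma (in prob_space) Chebyshev_integral_upper:
  fixes f g :: "'a \<Rightarrow> real"
  assumes f: "integrable M f" and g: "integrable M g" and fg: "integrable M (\<lambda>x. f x * g x)"
    and opposite: "AE x in M. AE y in M. 0 \<le> (f x - f y) * (g y - g x)"
  shows "(\<integral>x. f x * g x \<partial>M) \<le> (\<integral>x. f x \<partial>M) * (\<integral>x. g x \<partial>M)"
proof -
  define a b c where "a = (\<integral>x. f x \<partial>M)" and "b = (\<integral>x. g x \<partial>M)" and "c = (\<integral>x. f x * g x \<partial>M)"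
  have hf: "has_bochner_integral M f a" and hg: "has_bochner_integral M g b"
    and hfg: "has_bochner_integral M (\<lambda>x. f x * g x) c"
    using f g fg by (simp_all add: has_bochner_integral_iff a_def b_def c_def)
  have inner: "has_bochner_integral M (\<lambda>y. (f x - f y) * (g y - g x)) (f x * b - f x * g x - c + a * g x)"
    for x
  proof -
    have "has_bochner_integral M (\<lambda>y. f x * g y - f x * g x - f y * g y + f y * g x)
        (f x * b - f x * g x - c + a * g x)"
      by (intro has_bochner_integral_add has_bochner_integral_diff has_bochner_integral_mult_right
          has_bochner_integral_mult_left has_bochner_integral_const hf hg hfg)
    then show ?thesis
      by (rule has_bochner_integral_cong[THEN iffD1, rotated -1]) (simp_all add: algebra_simps)
  qed
  have "AE x in M. 0 \<le> f x * b - f x * g x - c + a * g x"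
    using opposite
  proof eventually_elim
    case (elim x)
    then have "0 \<le> (\<integral>y. (f x - f y) * (g y - g x) \<partial>M)"
      by (rule integral_nonneg_AE)
    with inner[of x] show ?case
      by (simp add: has_bochner_integral_iff)
  qed
  then have "0 \<le> (\<integral>x. f x * b - f x * g x - c + a * g x \<partial>M)"
    by (rule integral_nonneg_AE)
  moreover have "has_bochner_integral M (\<lambda>x. f x * b - f x * g x - c + a * g x) (a * b - c - c + a * b)"
    by (intro has_bochner_integral_add has_bochner_integral_diff has_bochner_integral_mult_right
        has_bochner_integral_mult_left has_bochner_integral_const hf hg hfg)
  ultimately show ?thesis
    by (simp add: has_bochner_integral_iff a_def b_def c_def)
qed

lemma mult_le_sum_squares: "x * y \<le> x\<^sup>2 + (y :: real)\<^sup>2"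
proof -
  have "0 \<le> (x - y)\<^sup>2"
    by simp
  then have "2 * (x * y) \<le> x\<^sup>2 + y\<^sup>2"
    by (simp add: power2_diff)
  moreover have "0 \<le> x\<^sup>2 + y\<^sup>2"
    by simp
  ultimately show ?thesis
    by linarith
qed

lemma integrable_pois_qf_mult_reflect:
  assumes "0 < mu1" and "0 < mu2"
  shows "integrable uniform_01 (\<lambda>u. real (pois_qf mu1 u) * real (pois_qf mu2 (1 - u)))"
proof (rule Bochner_Integration.integrable_bound)
  show "integrable uniform_01 (\<lambda>u. real (pois_qf mu1 u) ^ 2 + real (pois_qf mu2 (1 - u)) ^ 2)"
    using has_bochner_integral_pois_qf(2)[OF assms(1)] has_bochner_integral_pois_qf(4)[OF assms(2)]
    by (auto simp: has_bochner_integral_iff)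
  show "AE u in uniform_01. norm (real (pois_qf mu1 u) * real (pois_qf mu2 (1 - u)))
      \<le> norm (real (pois_qf mu1 u) ^ 2 + real (pois_qf mu2 (1 - u)) ^ 2)"
    by (intro AE_I2) (simp add: mult_le_sum_squares)
next
  have [measurable]: "pois_qf mu1 \<in> borel \<rightarrow>\<^sub>M count_space UNIV" "pois_qf mu2 \<in> borel \<rightarrow>\<^sub>M count_space UNIV"
    using assms by (simp_all add: measurable_pois_qf)
  have "(\<lambda>u. real (pois_qf mu1 u) * real (pois_qf mu2 (1 - u))) \<in> borel_measurable borel"
    by measurable
  then show "(\<lambda>u. real (pois_qf mu1 u) * real (pois_qf mu2 (1 - u))) \<in> borel_measurable uniform_01"
    by (simp add: measurable_uniform_01_eq)
qed

lemma cov_pois_qf_reflect_nonpos: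
  assumes mu1: "0 < mu1" and mu2: "0 < mu2"
  shows "cov uniform_01 (\<lambda>u. real (pois_qf mu1 u)) (\<lambda>u. real (pois_qf mu2 (1 - u))) \<le> 0"
proof -
  define Z1 Z2 where "Z1 = (\<lambda>u. real (pois_qf mu1 u))" and "Z2 = (\<lambda>u. real (pois_qf mu2 (1 - u)))"
  have opposite: "0 \<le> (Z1 x - Z1 y) * (Z2 y - Z2 x)" if "x \<in> {0<..<1}" "y \<in> {0<..<1}" for x y
  proof (cases "x \<le> y")
    case True
    then have "Z1 x \<le> Z1 y" and "Z2 y \<le> Z2 x"
      using that pois_qf_mono[OF mu1, of x y] pois_qf_mono[OF mu2, of "1 - y" "1 - x"]
      by (simp_all add: Z1_def Z2_def)
    then show ?thesis
      by (simp add: mult_nonpos_nonpos)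
  next
    case False
    then have "Z1 y \<le> Z1 x" and "Z2 x \<le> Z2 y"
      using that pois_qf_mono[OF mu1, of y x] pois_qf_mono[OF mu2, of "1 - x" "1 - y"]
      by (simp_all add: Z1_def Z2_def)
    then show ?thesis
      by simp
  qed
  have in_01: "AE x in uniform_01. x \<in> {0<..<1}"
    by (rule AE_uniform_measureI) auto
  have "(\<integral>u. Z1 u * Z2 u \<partial>uniform_01) \<le> (\<integral>u. Z1 u \<partial>uniform_01) * (\<integral>u. Z2 u \<partial>uniform_01)"
  proof (rule prob_space.Chebyshev_integral_upper[OF prob_space_uniform_01])
    show "integrable uniform_01 Z1" "integrable uniform_01 Z2"
      using has_bochner_integral_pois_qf(1)[OF mu1] has_bochner_integral_pois_qf(3)[OF mu2]
      by (auto simp: Z1_def Z2_def has_bochner_integral_iff)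
    show "integrable uniform_01 (\<lambda>u. Z1 u * Z2 u)"
      using integrable_pois_qf_mult_reflect[OF mu1 mu2] by (simp add: Z1_def Z2_def)
    show "AE x in uniform_01. AE y in uniform_01. 0 \<le> (Z1 x - Z1 y) * (Z2 y - Z2 x)"
      using in_01
    proof eventually_elim
      case (elim x)
      from in_01 show ?case
        by eventually_elim (rule opposite[OF elim])
    qed
  qed
  then show ?thesis
    by (simp add: cov_def Z1_def Z2_def)
qed

section \<open>Zero inflation\<close>

lemma cov_zero_inflated:
  fixes X Y :: "'a \<Rightarrow> real"
  assumes M: "prob_space M" and q: "0 \<le> q" "q \<le> 1"
    and X: "integrable M X" and Y: "integrable M Y" and XY: "integrable M (\<lambda>v. X v * Y v)"
  shows "cov (M \<Otimes>\<^sub>M measure_pmf (bernoulli_pmf q))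
      (\<lambda>(v, w). if w then X v else 0) (\<lambda>(v, w). if w then Y v else 0)
    = q * cov M X Y + q * (1 - q) * (\<integral>v. X v \<partial>M) * (\<integral>v. Y v \<partial>M)"
proof -
  have W: "has_bochner_integral (measure_pmf (bernoulli_pmf q)) (\<lambda>w. if w then 1 else 0) q"
    using q by (simp add: has_bochner_integral_iff integrable_measure_pmf_finite)
  have inflated: "(\<integral>z. (case z of (v, w) \<Rightarrow> if w then h v else 0) \<partial>(M \<Otimes>\<^sub>M measure_pmf (bernoulli_pmf q)))
      = (\<integral>v. h v \<partial>M) * q" if "integrable M h" for h
  proof -
    have "has_bochner_integral (M \<Otimes>\<^sub>M measure_pmf (bernoulli_pmf q))
        (\<lambda>z. h (fst z) * (if snd z then 1 else 0)) ((\<integral>v. h v \<partial>M) * q)"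
      using that W by (intro has_bochner_integral_pair_measure_mult prob_space_imp_sigma_finite M
          measure_pmf.prob_space_axioms) (simp_all add: has_bochner_integral_iff)
    then show ?thesis
      by (simp add: has_bochner_integral_iff split_beta if_distrib cong: if_cong)
  qed
  have prod: "(\<lambda>z. (case z of (v, w) \<Rightarrow> if w then X v else 0) * (case z of (v, w) \<Rightarrow> if w then Y v else 0))
      = (\<lambda>(v, w). if w then X v * Y v else 0)"
    by auto
  show ?thesis
    unfolding cov_def prod using inflated[OF X] inflated[OF Y] inflated[OF XY]
    by (simp add: algebra_simps power2_eq_square)
qed

section \<open>Moments and correlations of the model\<close>

lemma has_bochner_integral_pois_pair:
  assumes "0 \<le> m1" and "0 \<le> m2"
  defines "P \<equiv> measure_pmf (pois m1) \<Otimes>\<^sub>M measure_pmf (pois m2)"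
  shows "has_bochner_integral P (\<lambda>y. real (fst y)) m1"
    and "has_bochner_integral P (\<lambda>y. real (snd y)) m2"
    and "has_bochner_integral P (\<lambda>y. real (fst y) * real (fst y)) (m1 + m1\<^sup>2)"
    and "has_bochner_integral P (\<lambda>y. real (snd y) * real (snd y)) (m2 + m2\<^sup>2)"
    and "has_bochner_integral P (\<lambda>y. real (fst y) * real (snd y)) (m1 * m2)"
proof -
  note prob = measure_pmf.prob_space_axioms
  note sf = prob_space_imp_sigma_finite[OF prob]
  note on_fst = has_bochner_integral_pair_measure_fst[OF sf prob]
    and on_snd = has_bochner_integral_pair_measure_snd[OF prob sf]
  note pois1 = has_bochner_integral_pois[OF assms(1)] and pois2 = has_bochner_integral_pois[OF assms(2)]
  show "has_bochner_integral P (\<lambda>y. real (fst y)) m1"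
    "has_bochner_integral P (\<lambda>y. real (snd y)) m2"
    "has_bochner_integral P (\<lambda>y. real (fst y) * real (fst y)) (m1 + m1\<^sup>2)"
    "has_bochner_integral P (\<lambda>y. real (snd y) * real (snd y)) (m2 + m2\<^sup>2)"
    using on_fst[OF pois1(1)] on_snd[OF pois2(1)] on_fst[OF pois1(2)] on_snd[OF pois2(2)]
    by (simp_all add: P_def power2_eq_square)
  show "has_bochner_integral P (\<lambda>y. real (fst y) * real (snd y)) (m1 * m2)"
    unfolding P_def using pois1(1) pois2(1) by (intro has_bochner_integral_pair_measure_mult sf)
qed

lemma has_bochner_integral_pois_qf_pair:
  assumes mu1: "0 < mu1" and mu2: "0 < mu2"
  defines "Z1 \<equiv> \<lambda>u. real (pois_qf mu1 u)" and "Z2 \<equiv> \<lambda>u. real (pois_qf mu2 (1 - u))"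
  shows "has_bochner_integral uniform_01 Z1 mu1"
    and "has_bochner_integral uniform_01 Z2 mu2"
    and "has_bochner_integral uniform_01 (\<lambda>u. Z1 u * Z1 u) (mu1 + mu1\<^sup>2)"
    and "has_bochner_integral uniform_01 (\<lambda>u. Z2 u * Z2 u) (mu2 + mu2\<^sup>2)"
    and "has_bochner_integral uniform_01 (\<lambda>u. Z1 u * Z2 u) (mu1 * mu2 + cov uniform_01 Z1 Z2)"
proof -
  show "has_bochner_integral uniform_01 Z1 mu1" "has_bochner_integral uniform_01 Z2 mu2"
    "has_bochner_integral uniform_01 (\<lambda>u. Z1 u * Z1 u) (mu1 + mu1\<^sup>2)"
    "has_bochner_integral uniform_01 (\<lambda>u. Z2 u * Z2 u) (mu2 + mu2\<^sup>2)"
    using has_bochner_integral_pois_qf[OF mu1] has_bochner_integral_pois_qf[OF mu2]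
    by (simp_all add: Z1_def Z2_def power2_eq_square)
  then show "has_bochner_integral uniform_01 (\<lambda>u. Z1 u * Z2 u) (mu1 * mu2 + cov uniform_01 Z1 Z2)"
    using integrable_pois_qf_mult_reflect[OF mu1 mu2]
    by (simp add: Z1_def Z2_def cov_def has_bochner_integral_iff)
qed

lemma T1_eq: "T1 l1 th = (\<lambda>z. real (pois_qf (th * l1) (fst z)) + real (fst (snd z)))"
  by (auto simp: T1_def fun_eq_iff)

lemma T2_eq: "T2 l2 th = (\<lambda>z. real (pois_qf (th * l2) (1 - fst z)) + real (snd (snd z)))"
  by (auto simp: T2_def fun_eq_iff)

lemma T_moments:
  fixes l1 l2 th :: real
  assumes "0 < l1" and "0 < l2" and "0 < th" and "th \<le> 1"
  defines "cZ \<equiv>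
    cov uniform_01 (\<lambda>u. real (pois_qf (th * l1) u)) (\<lambda>u. real (pois_qf (th * l2) (1 - u)))"
  shows "has_bochner_integral (T_space l1 l2 th) (T1 l1 th) l1"
    and "has_bochner_integral (T_space l1 l2 th) (T2 l2 th) l2"
    and "has_bochner_integral (T_space l1 l2 th) (\<lambda>z. T1 l1 th z * T1 l1 th z) (l1 + l1\<^sup>2)"
    and "has_bochner_integral (T_space l1 l2 th) (\<lambda>z. T2 l2 th z * T2 l2 th z) (l2 + l2\<^sup>2)"
    and "has_bochner_integral (T_space l1 l2 th) (\<lambda>z. T1 l1 th z * T2 l2 th z) (l1 * l2 + cZ)"
proof -
  have mu: "0 < th * l1" "0 < th * l2" and m: "0 \<le> (1 - th) * l1" "0 \<le> (1 - th) * l2"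
    using assms by auto
  note Z = has_bochner_integral_pois_qf_pair[OF mu]
  note Y = has_bochner_integral_pois_pair[OF m]
  have "prob_space (measure_pmf (pois ((1 - th) * l1)) \<Otimes>\<^sub>M measure_pmf (pois ((1 - th) * l2)))"
    by (intro prob_space_pair measure_pmf.prob_space_axioms)
  note add = has_bochner_integral_pair_measure_add[OF prob_space_uniform_01 this]
    and add_mult = has_bochner_integral_pair_measure_add_mult[OF prob_space_uniform_01 this]
  show "has_bochner_integral (T_space l1 l2 th) (T1 l1 th) l1"
    using add[OF Z(1) Y(1)] unfolding T_space_def T1_eq
    by (simp add: algebra_simps)
  show "has_bochner_integral (T_space l1 l2 th) (T2 l2 th) l2"
    using add[OF Z(2) Y(2)] unfolding T_space_def T2_eq
    by (simp add: algebra_simps)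
  show "has_bochner_integral (T_space l1 l2 th) (\<lambda>z. T1 l1 th z * T1 l1 th z) (l1 + l1\<^sup>2)"
    using add_mult[OF Z(1) Z(1) Z(3) Y(1) Y(1) Y(3)] unfolding T_space_def T1_eq
    by (simp add: algebra_simps power2_eq_square)
  show "has_bochner_integral (T_space l1 l2 th) (\<lambda>z. T2 l2 th z * T2 l2 th z) (l2 + l2\<^sup>2)"
    using add_mult[OF Z(2) Z(2) Z(4) Y(2) Y(2) Y(4)] unfolding T_space_def T2_eq
    by (simp add: algebra_simps power2_eq_square)
  show "has_bochner_integral (T_space l1 l2 th) (\<lambda>z. T1 l1 th z * T2 l2 th z) (l1 * l2 + cZ)"
    using add_mult[OF Z(1) Z(2) Z(5) Y(1) Y(2) Y(5)] 
    unfolding T_space_def T1_eq T2_eq cZ_def by (simp add: algebra_simps)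
qed

lemma T_cov:
  fixes l1 l2 th :: real
  assumes "0 < l1" and "0 < l2" and "0 < th" and "th \<le> 1"
  shows "cov (T_space l1 l2 th) (T1 l1 th) (T1 l1 th) = l1"
    and "cov (T_space l1 l2 th) (T2 l2 th) (T2 l2 th) = l2"
    and "cov (T_space l1 l2 th) (T1 l1 th) (T2 l2 th) =
      cov uniform_01 (\<lambda>u. real (pois_qf (th * l1) u)) (\<lambda>u. real (pois_qf (th * l2) (1 - u)))"
  using T_moments[OF assms] by (simp_all add: cov_def has_bochner_integral_iff power2_eq_square)

lemma corrT_nonpos:
  fixes l1 l2 th :: real
  assumes "0 < l1" and "0 < l2" and "0 < th" and "th \<le> 1"
  shows "corrT l1 l2 th \<le> 0"
proof -
  have "cov uniform_01 (\<lambda>u. real (pois_qf (th * l1) u)) (\<lambda>u. real (pois_qf (th * l2) (1 - u))) \<le> 0"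
    using assms by (intro cov_pois_qf_reflect_nonpos) auto
  then show ?thesis
    using T_cov[OF assms] assms by (simp add: corrT_def corr_def divide_nonpos_pos)
qed

lemma zero_inflated_corr_eq:
  fixes l1 l2 p c :: real
  assumes l1: "0 < l1" and l2: "0 < l2" and p: "0 < p" "p < 1"
  shows "((1 - p) * c + (1 - p) * p * l1 * l2) /
      sqrt (((1 - p) * l1 + (1 - p) * p * l1 * l1) * ((1 - p) * l2 + (1 - p) * p * l2 * l2))
    = a_Lam l1 l2 p * (c / sqrt (l1 * l2)) + b_Lam l1 l2 p"
proof -
  define G s where "G = (1 + p * l1) * (1 + p * l2)" and "s = sqrt (l1 * l2)"
  have G: "0 < G" and s: "0 < s" and ss: "s * s = l1 * l2"
    using l1 l2 p by (simp_all add: G_def s_def add_pos_pos)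
  have "((1 - p) * l1 + (1 - p) * p * l1 * l1) * ((1 - p) * l2 + (1 - p) * p * l2 * l2)
      = ((1 - p) * s)\<^sup>2 * G"
    by (simp add: G_def power2_eq_square algebra_simps ss)
  then have "sqrt (((1 - p) * l1 + (1 - p) * p * l1 * l1) * ((1 - p) * l2 + (1 - p) * p * l2 * l2))
      = (1 - p) * s * sqrt G"
    using p s by (simp add: real_sqrt_mult)
  moreover have "(1 - p) * c + (1 - p) * p * l1 * l2 = (1 - p) * (c + p * (s * s))"
    by (simp add: ss algebra_simps)
  moreover have "(1 - p) * (c + p * (s * s)) / ((1 - p) * s * sqrt G)
      = 1 / sqrt G * (c / s) + p * (1 / sqrt G) * s"
    using p s G by (simp add: field_simps)
  ultimately show ?thesis
    by (simp add: a_Lam_def b_Lam_def G_def s_def)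
qed

lemma corrX_eq:
  fixes l1 l2 th p :: real
  assumes "0 < l1" and "0 < l2" and "0 < th" and "th \<le> 1" and p: "0 < p" "p < 1"
  shows "corrX l1 l2 th p = a_Lam l1 l2 p * corrT l1 l2 th + b_Lam l1 l2 p"
proof -
  note moments = T_moments[OF assms(1-4)] and covT = T_cov[OF assms(1-4)]
  have prob: "prob_space (T_space l1 l2 th)"
    unfolding T_space_def by (intro prob_space_pair prob_space_uniform_01 measure_pmf.prob_space_axioms)
  have int: "integrable (T_space l1 l2 th) (T1 l1 th)" "integrable (T_space l1 l2 th) (T2 l2 th)"
      "integrable (T_space l1 l2 th) (\<lambda>z. T1 l1 th z * T1 l1 th z)"
      "integrable (T_space l1 l2 th) (\<lambda>z. T2 l2 th z * T2 l2 th z)"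
      "integrable (T_space l1 l2 th) (\<lambda>z. T1 l1 th z * T2 l2 th z)"
    and mean: "(\<integral>z. T1 l1 th z \<partial>T_space l1 l2 th) = l1" "(\<integral>z. T2 l2 th z \<partial>T_space l1 l2 th) = l2"
    using moments by (simp_all add: has_bochner_integral_iff)
  note inflated = cov_zero_inflated[OF prob, of "1 - p"]
  have "corrX l1 l2 th p =
      ((1 - p) * cov (T_space l1 l2 th) (T1 l1 th) (T2 l2 th) + (1 - p) * p * l1 * l2) /
      sqrt (((1 - p) * l1 + (1 - p) * p * l1 * l1) * ((1 - p) * l2 + (1 - p) * p * l2 * l2))"
    using p inflated[OF _ _ int(1,2,5)] inflated[OF _ _ int(1,1,3)] inflated[OF _ _ int(2,2,4)]
    by (simp add: corrX_def corr_def X_space_def X1_def X2_def mean covT(1,2) mult.assoc)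
  also have "\<dots> = a_Lam l1 l2 p * corrT l1 l2 th + b_Lam l1 l2 p"
    using assms by (simp add: zero_inflated_corr_eq corrT_def corr_def covT)
  finally show ?thesis .
qed

lemma a_Lam_pos: "0 \<le> l1 \<Longrightarrow> 0 \<le> l2 \<Longrightarrow> 0 \<le> p \<Longrightarrow> 0 < a_Lam l1 l2 p"
  unfolding a_Lam_def by (simp add: add_pos_nonneg)

lemma a_Lam_antimono:
  assumes "0 \<le> l1" and "0 \<le> l2"
  shows "antimono_on {0..} (a_Lam l1 l2)"
proof (rule monotone_onI)
  fix p q :: real
  assume "p \<in> {0..}" and "q \<in> {0..}" and "p \<le> q"
  then have "(1 + p * l1) * (1 + p * l2) \<le> (1 + q * l1) * (1 + q * l2)"
    using assms by (auto intro!: mult_mono mult_right_mono add_nonneg_nonneg)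
  moreover have "0 < (1 + p * l1) * (1 + p * l2)"
    using assms \<open>p \<in> {0..}\<close> by (intro mult_pos_pos add_pos_nonneg) auto
  ultimately show "a_Lam l1 l2 q \<le> a_Lam l1 l2 p"
    unfolding a_Lam_def by (intro divide_left_mono real_sqrt_le_mono mult_pos_pos) auto
qed

lemma b_Lam_strict_mono:
  assumes l1: "0 < l1" and l2: "0 < l2"
  shows "strict_mono_on {0..} (b_Lam l1 l2)"
proof (rule strict_mono_onI)
  fix p q :: real
  assume "p \<in> {0..}" and "q \<in> {0..}" and pq: "p < q"
  then have p: "0 \<le> p" and q: "0 < q"
    by auto
  define Gp Gq where "Gp = (1 + p * l1) * (1 + p * l2)" and "Gq = (1 + q * l1) * (1 + q * l2)"
  have Gp: "0 < Gp" and Gq: "0 < Gq"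
    using l1 l2 p q by (simp_all add: Gp_def Gq_def add_pos_nonneg)
  have "q * q * Gp - p * p * Gq = (q - p) * (q + p) + p * q * (q - p) * (l1 + l2)"
    by (simp add: Gp_def Gq_def algebra_simps)
  also have "\<dots> > 0"
    using p q pq l1 l2 by (intro add_pos_nonneg mult_pos_pos mult_nonneg_nonneg) auto
  finally have "sqrt (p * p * Gq) < sqrt (q * q * Gp)"
    by simp
  then have "p * sqrt Gq < q * sqrt Gp"
    using p q by (simp add: real_sqrt_mult)
  then have "p / sqrt Gp < q / sqrt Gq"
    using Gp Gq by (simp add: divide_simps)
  then have "p / sqrt Gp * sqrt (l1 * l2) < q / sqrt Gq * sqrt (l1 * l2)"
    using l1 l2 by (intro mult_strict_right_mono) auto
  then show "b_Lam l1 l2 p < b_Lam l1 l2 q"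
    by (simp add: b_Lam_def a_Lam_def Gp_def Gq_def)
qed

theorem mainTheorem5:
  fixes l1 l2 th :: real
  assumes "0 < l1" and "0 < l2" and "0 < th" and "th \<le> 1"
  shows "(\<forall>p\<in>{0<..<1::real}. \<forall>q\<in>{0<..<1::real}. p \<le> q \<longrightarrow> corrX l1 l2 th p \<le> corrX l1 l2 th q) \<and>
         (\<forall>p\<in>{0<..<1::real}. corrX l1 l2 th p = a_Lam l1 l2 p * corrT l1 l2 th + b_Lam l1 l2 p) \<and>
         (\<forall>p\<in>{0<..<1::real}. \<forall>q\<in>{0<..<1::real}. p \<le> q \<longrightarrow> a_Lam l1 l2 q \<le> a_Lam l1 l2 p) \<and>
         (\<forall>p\<in>{0<..<1::real}. 0 < a_Lam l1 l2 p) \<and>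
         strict_mono_on {0<..<1::real} (b_Lam l1 l2) \<and>
         corrT l1 l2 th \<le> 0"
proof -
  have corrT: "corrT l1 l2 th \<le> 0"
    by (rule corrT_nonpos[OF assms])
  have formula: "\<forall>p\<in>{0<..<1::real}. corrX l1 l2 th p = a_Lam l1 l2 p * corrT l1 l2 th + b_Lam l1 l2 p"
    using corrX_eq[OF assms] by auto
  have a: "antimono_on {0..} (a_Lam l1 l2)" and b: "strict_mono_on {0..} (b_Lam l1 l2)"
    using assms by (simp_all add: a_Lam_antimono b_Lam_strict_mono)
  have corrX_mono: "corrX l1 l2 th p \<le> corrX l1 l2 th q"
    if "p \<in> {0<..<1}" and "q \<in> {0<..<1}" and "p \<le> q" for p q
  proof -
    have "a_Lam l1 l2 p * corrT l1 l2 th \<le> a_Lam l1 l2 q * corrT l1 l2 th"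
      using monotone_onD[OF a, of p q] that corrT by (intro mult_right_mono_neg) auto
    moreover have "b_Lam l1 l2 p \<le> b_Lam l1 l2 q"
      using strict_mono_on_leD[OF b, of p q] that by auto
    ultimately show ?thesis
      using formula that by simp
  qed
  show ?thesis
  proof (intro conjI)
    show "strict_mono_on {0<..<1::real} (b_Lam l1 l2)"
      using b by (rule monotone_on_subset) auto
  qed (use corrX_mono formula monotone_onD[OF a] a_Lam_pos assms corrT in auto)
qed

end
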